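(* With the notation of the context, the Laurent polynomials $\varepsilon^\sigma_i[y;q^{-1}]:=e^\sigma_i[y;a^{-1},b^{-1},c^{-1},d^{-1}\mid q^{-1}]$ satisfy, for $1\le i\le D-1$, $$\varepsilon^+_{i-1}[y;q^{-1}]=\frac{ab(1-q^i)(1-cdq^{i-1})}{ab-1}\frac{(abcd;q)_{2i-1}}{a^i(q,bc,bd,cd;q)_i}\big(P_i-Q_i\big),$$ $$\varepsilon^-_i[y;q^{-1}]=\frac{(1-abq^i)(1-abcdq^{i-1})}{1-ab}\frac{(abcd;q)_{2i-1}}{a^i(q,bc,bd,cd;q)_i}\Big(P_i-\frac{ab(1-q^i)(1-cdq^{i-1})}{(1-abq^i)(1-abcdq^{i-1})}Q_i\Big),$$ and moreover $\varepsilon^-_0[y;q^{-1}]=1$ and $\varepsilon^+_{D-1}[y;q^{-1}]=\frac{(abcd;q)_{2D-1}}{a^D(q,bc,bd;q)_D(cd;q)_{D-1}}P_D$, where $P_i=P_i[y;a,b,c,d\mid q]$ and $Q_i=a^{-1}b^{-1}y^{-1}(1-ay)(1-by)P_{i-1}[y;aq,bq,c,d\mid q]$.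
   Context: $q\in\mathbb{C}^*$ is not a root of unity; for $p\in\mathbb{C}^*$, $(\alpha;p)_n=(1-\alpha)(1-\alpha p)\cdots(1-\alpha p^{n-1})$ and $(\alpha_1,\dots,\alpha_r;p)_n=\prod_k(\alpha_k;p)_n$. $\Gamma$ is a $Q$-polynomial distance-regular graph of diameter $D\ge3$ containing a Delsarte clique and of $q$-Racah type: relative to a fixed vertex, its Leonard system (adjacency matrix, dual adjacency matrix, primitive and dual primitive idempotents in the $Q$-polynomial ordering) has eigenvalues $\theta_i=\theta_0+h(1-q^i)(1-sq^{i+1})q^{-i}$, dual eigenvalues $\theta^*_i=\theta^*_0+h^*(1-q^i)(1-s^*q^{i+1})q^{-i}$, first split sequence $\varphi_i=hh^*q^{1-2i}(1-q^i)(1-q^{i-D-1})(1-r_1q^i)(1-r_2q^i)$ and second split sequence $\phi_i=hh^*q^{1-2i}(1-q^i)(1-q^{i-D-1})(r_1-s^*q^i)(r_2-s^*q^i)/s^*$, for nonzero $h,h^*,s,s^*,r_1,r_2$ with $r_1r_2=ss^*q^{D+1}$; none of $q^i,r_1q^i,r_2q^i,s^*q^i/r_1,s^*q^i/r_2$ equals $1$ for $1\le i\le D$, and neither $sq^i$ nor $s^*q^i$ equals $1$ for $2\le i\le 2D$. Square roots $q^{1/2},s^{1/2},s^{*1/2},r_1^{1/2},r_2^{1/2}$ are fixed with $r_1^{1/2}r_2^{1/2}=s^{1/2}s^{*1/2}q^{(D+1)/2}$, $q^{m/2}=(q^{1/2})^m$. Let $a=\frac{r_1^{1/2}r_2^{1/2}}{s^{*1/2}q^{D/2}}$,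 $b=\frac{s^{*1/2}}{r_1^{1/2}r_2^{1/2}q^{D/2}}$, $c=\frac{r_2^{1/2}s^{*1/2}q^{(D+2)/2}}{r_1^{1/2}}$, $d=\frac{r_1^{1/2}s^{*1/2}q^{(D+2)/2}}{r_2^{1/2}}$ (so $ab=q^{-D}$). For nonzero $\alpha,\beta,\gamma,\delta,p$: $P_i[y;\alpha,\beta,\gamma,\delta\mid p]=\frac{(\alpha\beta,\alpha\gamma,\alpha\delta;p)_i}{\alpha^i(\alpha\beta\gamma\delta p^{i-1};p)_i}\sum_{j=0}^i\frac{(p^{-i},\alpha\beta\gamma\delta p^{i-1},\alpha y,\alpha y^{-1};p)_j}{(\alpha\beta,\alpha\gamma,\alpha\delta,p;p)_j}p^j$, and (whenever denominators are nonzero) for $1\le i\le D-1$ $e^+_{i-1}[y;\alpha,\beta,\gamma,\delta\mid p]=\frac{\alpha\beta(1-p^i)(1-\gamma\delta p^{i-1})}{(\alpha\beta-1)(1-\alpha\beta\gamma\delta p^{2i-1})}\frac{(\alpha\beta\gamma\delta;p)_{2i}}{\alpha^i(p,\beta\gamma,\beta\delta,\gamma\delta;p)_i}\Big(P_i[y;\alpha,\beta,\gamma,\delta\mid p]-y(1-\alpha y^{-1})(1-\beta y^{-1})P_{i-1}[y;\alpha p,\beta p,\gamma,\delta\mid p]\Big)$, $e^-_i[y;\alpha,\beta,\gamma,\delta\mid p]=\frac{(1-\alpha\beta p^i)(1-\alpha\beta\gamma\delta p^{i-1})}{(1-\alpha\beta)(1-\alpha\beta\gamma\delta p^{2i-1})}\frac{(\alpha\beta\gamma\delta;p)_{2i}}{\alpha^i(p,\beta\gamma,\beta\delta,\gamma\delta;p)_i}\Big(P_i[y;\alpha,\beta,\gamma,\delta\mid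 p]-\frac{\alpha\beta(1-p^i)(1-\gamma\delta p^{i-1})}{(1-\alpha\beta p^i)(1-\alpha\beta\gamma\delta p^{i-1})}y(1-\alpha y^{-1})(1-\beta y^{-1})P_{i-1}[y;\alpha p,\beta p,\gamma,\delta\mid p]\Big)$, $e^-_0=1$, $e^+_{D-1}[y;\alpha,\beta,\gamma,\delta\mid p]=\frac{(\alpha\beta\gamma\delta;p)_{2D-1}}{\alpha^D(p,\beta\gamma,\beta\delta;p)_D(\gamma\delta;p)_{D-1}}P_D[y;\alpha,\beta,\gamma,\delta\mid p]$. *)

theory Defs
  imports Complex_Main
begin

definition qpoch :: "complex \<Rightarrow> complex \<Rightarrow> nat \<Rightarrow> complex" where
  "qpoch \<alpha> p n = (\<Prod>k<n. (1 - \<alpha> * p ^ k))"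

definition AWP :: "nat \<Rightarrow> complex \<Rightarrow> complex \<Rightarrow> complex \<Rightarrow> complex \<Rightarrow> complex \<Rightarrow> complex \<Rightarrow> complex" where
  "AWP i y \<alpha> \<beta> \<gamma> \<delta> p =
     (qpoch (\<alpha>*\<beta>) p i * qpoch (\<alpha>*\<gamma>) p i * qpoch (\<alpha>*\<delta>) p i)
       / (\<alpha> ^ i * qpoch (\<alpha>*\<beta>*\<gamma>*\<delta> * p ^ (i - 1)) p i)
     * (\<Sum>j\<le>i. (qpoch (inverse p ^ i) p j * qpoch (\<alpha>*\<beta>*\<gamma>*\<delta> * p ^ (i - 1)) p j
                    * qpoch (\<alpha> * y) p j * qpoch (\<alpha> * inverse y) p j)
                  / (qpoch (\<alpha>*\<beta>) p j * qpoch (\<alpha>*\<gamma>) p j * qpoch (\<alpha>*\<delta>) p j * qpoch p p j)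
                  * p ^ j)"

text \<open>The general formula for e^+_{i-1} (valid for 1 <= i <= D-1).\<close>
definition eplus_gen :: "nat \<Rightarrow> complex \<Rightarrow> complex \<Rightarrow> complex \<Rightarrow> complex \<Rightarrow> complex \<Rightarrow> complex \<Rightarrow> complex" where
  "eplus_gen i y \<alpha> \<beta> \<gamma> \<delta> p =
     (\<alpha>*\<beta> * (1 - p ^ i) * (1 - \<gamma>*\<delta> * p ^ (i - 1)))
       / ((\<alpha>*\<beta> - 1) * (1 - \<alpha>*\<beta>*\<gamma>*\<delta> * p ^ (2*i - 1)))
     * qpoch (\<alpha>*\<beta>*\<gamma>*\<delta>) p (2*i)
       / (\<alpha> ^ i * (qpoch p p i * qpoch (\<beta>*\<gamma>) p i * qpoch (\<beta>*\<delta>) p i * qpoch (\<gamma>*\<delta>) p i))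
     * (AWP i y \<alpha> \<beta> \<gamma> \<delta> p
        - y * (1 - \<alpha> * inverse y) * (1 - \<beta> * inverse y) * AWP (i - 1) y (\<alpha>*p) (\<beta>*p) \<gamma> \<delta> p)"

definition eplus_last :: "nat \<Rightarrow> complex \<Rightarrow> complex \<Rightarrow> complex \<Rightarrow> complex \<Rightarrow> complex \<Rightarrow> complex \<Rightarrow> complex" where
  "eplus_last D y \<alpha> \<beta> \<gamma> \<delta> p =
     qpoch (\<alpha>*\<beta>*\<gamma>*\<delta>) p (2*D - 1)
       / (\<alpha> ^ D * (qpoch p p D * qpoch (\<beta>*\<gamma>) p D * qpoch (\<beta>*\<delta>) p D * qpoch (\<gamma>*\<delta>) p (D - 1)))
     * AWP D y \<alpha> \<beta> \<gamma> \<delta> p"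

definition eplus :: "nat \<Rightarrow> nat \<Rightarrow> complex \<Rightarrow> complex \<Rightarrow> complex \<Rightarrow> complex \<Rightarrow> complex \<Rightarrow> complex \<Rightarrow> complex" where
  "eplus D j y \<alpha> \<beta> \<gamma> \<delta> p =
     (if j + 1 = D then eplus_last D y \<alpha> \<beta> \<gamma> \<delta> p else eplus_gen (j + 1) y \<alpha> \<beta> \<gamma> \<delta> p)"

definition eminus :: "nat \<Rightarrow> complex \<Rightarrow> complex \<Rightarrow> complex \<Rightarrow> complex \<Rightarrow> complex \<Rightarrow> complex \<Rightarrow> complex" where
  "eminus i y \<alpha> \<beta> \<gamma> \<delta> p =
     (if i = 0 then 1 else
     (1 - \<alpha>*\<beta> * p ^ i) * (1 - \<alpha>*\<beta>*\<gamma>*\<delta> * p ^ (i - 1))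
       / ((1 - \<alpha>*\<beta>) * (1 - \<alpha>*\<beta>*\<gamma>*\<delta> * p ^ (2*i - 1)))
     * qpoch (\<alpha>*\<beta>*\<gamma>*\<delta>) p (2*i)
       / (\<alpha> ^ i * (qpoch p p i * qpoch (\<beta>*\<gamma>) p i * qpoch (\<beta>*\<delta>) p i * qpoch (\<gamma>*\<delta>) p i))
     * (AWP i y \<alpha> \<beta> \<gamma> \<delta> p
        - (\<alpha>*\<beta> * (1 - p ^ i) * (1 - \<gamma>*\<delta> * p ^ (i - 1)))
            / ((1 - \<alpha>*\<beta> * p ^ i) * (1 - \<alpha>*\<beta>*\<gamma>*\<delta> * p ^ (i - 1)))
          * y * (1 - \<alpha> * inverse y) * (1 - \<beta> * inverse y) * AWP (i - 1) y (\<alpha>*p) (\<beta>*p) \<gamma> \<delta> p))"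

end

theory Submission
  imports Defs
begin

text \<open>Inverting a parameter and the base of a q-Pochhammer symbol only rescales it:
  (1/x; 1/p)_n = (-1/x)^n p^(-(n choose 2)) (x; p)_n. In the terminating balanced 4phi3 series
  inside the Askey-Wilson polynomial these factors cancel term by term, and by the balancing
  condition so do those of its prefactor; hence P_i is invariant under inverting
  alpha, beta, gamma, delta and p. It remains to compare the explicit prefactors of e^+ and e^-:
  the factor 1 - abcd q^(2i-1) split off from (abcd; q)_(2i) is absorbed by the leading
  coefficient, and for e^+_(D-1) the missing power of q is supplied by a b q^D = 1.\<close>

lemma qpoch_Suc: "qpoch x p (Suc n) = qpoch x p n * (1 - x * p ^ n)"
  unfolding qpoch_def by simp

lemma Suc_choose_two: "Suc n choose 2 = (n choose 2) + n"
  by (simp add: numeral_2_eq_2)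

lemma double_choose_two: "(2 * n) choose 2 = 4 * (n choose 2) + n"
proof (induction n)
  case (Suc n)
  have "2 * Suc n = Suc (Suc (2 * n))" by simp
  then show ?case using Suc by (simp only: Suc_choose_two) simp
qed simp

lemma Suc_double_choose_two: "Suc (2 * n) choose 2 = 3 * (Suc n choose 2) + (n choose 2)"
  by (simp only: Suc_choose_two double_choose_two) simp

lemma two_times_choose_two: "2 * (n choose 2) = n * (n - 1)"
proof (induction n)
  case (Suc n)
  then show ?case by (cases n) (simp_all add: Suc_choose_two algebra_simps)
qed (simp add: binomial_eq_0)

lemma qpoch_inverse:
  fixes x p :: complex
  assumes "x \<noteq> 0" "p \<noteq> 0"
  shows "qpoch (inverse x) (inverse p) n = (- inverse x) ^ n * inverse p ^ (n choose 2) * qpoch x p n"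
proof (induction n)
  case (Suc n)
  have "1 - inverse x * inverse p ^ n = - inverse x * inverse p ^ n * (1 - x * p ^ n)"
    using assms by (simp add: field_simps)
  with Suc show ?case by (simp add: qpoch_Suc Suc_choose_two power_add)
qed (simp add: qpoch_def binomial_eq_0)

lemma qpoch_prod4_inverse:
  fixes x1 x2 x3 x4 p :: complex
  assumes "x1 \<noteq> 0" "x2 \<noteq> 0" "x3 \<noteq> 0" "x4 \<noteq> 0" "p \<noteq> 0"
  shows "qpoch (inverse x1) (inverse p) n * qpoch (inverse x2) (inverse p) n
           * qpoch (inverse x3) (inverse p) n * qpoch (inverse x4) (inverse p) n
       = inverse (x1 * x2 * x3 * x4) ^ n * inverse p ^ (4 * (n choose 2))
         * (qpoch x1 p n * qpoch x2 p n * qpoch x3 p n * qpoch x4 p n)"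
proof -
  have regroup: "s1 * W * Q1 * (s2 * W * Q2) * (s3 * W * Q3) * (s4 * W * Q4)
      = (s1 * s2 * s3 * s4) * W ^ 4 * (Q1 * Q2 * Q3 * Q4)" for s1 s2 s3 s4 W Q1 Q2 Q3 Q4 :: complex
    by (simp add: power4_eq_xxxx mult_ac)
  have "(- inverse x1) * (- inverse x2) * (- inverse x3) * (- inverse x4) = inverse (x1 * x2 * x3 * x4)"
    by (simp add: inverse_mult_distrib)
  then have "(- inverse x1) ^ n * (- inverse x2) ^ n * (- inverse x3) ^ n * (- inverse x4) ^ n
      = inverse (x1 * x2 * x3 * x4) ^ n"
    by (simp flip: power_mult_distrib)
  moreover have "(inverse p ^ (n choose 2)) ^ 4 = inverse p ^ (4 * (n choose 2))"
    by (metis power_mult mult.commute)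
  ultimately show ?thesis
    unfolding assms(1-4)[THEN qpoch_inverse[OF _ assms(5)]] regroup by simp
qed

lemma qpoch_ratio_inverse:
  fixes x1 x2 x3 x4 y1 y2 y3 y4 p :: complex
  assumes "x1 \<noteq> 0" "x2 \<noteq> 0" "x3 \<noteq> 0" "x4 \<noteq> 0" "y1 \<noteq> 0" "y2 \<noteq> 0" "y3 \<noteq> 0" "y4 \<noteq> 0"
    and "p \<noteq> 0"
  shows "qpoch (inverse x1) (inverse p) n * qpoch (inverse x2) (inverse p) n
           * qpoch (inverse x3) (inverse p) n * qpoch (inverse x4) (inverse p) n
         / (qpoch (inverse y1) (inverse p) n * qpoch (inverse y2) (inverse p) n
           * qpoch (inverse y3) (inverse p) n * qpoch (inverse y4) (inverse p) n)
       = ((y1 * y2 * y3 * y4) / (x1 * x2 * x3 * x4)) ^ n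
         * (qpoch x1 p n * qpoch x2 p n * qpoch x3 p n * qpoch x4 p n
            / (qpoch y1 p n * qpoch y2 p n * qpoch y3 p n * qpoch y4 p n))"
proof -
  have cancel: "A * W * X / (B * W * Y) = A / B * (X / Y)" if "W \<noteq> 0" for A B W X Y :: complex
    using that by simp
  have "inverse (x1 * x2 * x3 * x4) ^ n / inverse (y1 * y2 * y3 * y4) ^ n
      = ((y1 * y2 * y3 * y4) / (x1 * x2 * x3 * x4)) ^ n"
  proof -
    have "inverse (x1 * x2 * x3 * x4) / inverse (y1 * y2 * y3 * y4) = (y1 * y2 * y3 * y4) / (x1 * x2 * x3 * x4)"
      by (simp add: divide_inverse mult.commute)
    then show ?thesis by (simp flip: power_divide)
  qed
  then show ?thesis
    unfolding qpoch_prod4_inverse[OF assms(1-4,9)] qpoch_prod4_inverse[OF assms(5-9)]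
    using assms(9) by (subst cancel) simp_all
qed

lemma qpoch_prefactor_inverse:
  fixes u v w s p :: complex
  assumes "u \<noteq> 0" "v \<noteq> 0" "w \<noteq> 0" "s \<noteq> 0" "p \<noteq> 0"
  shows "qpoch (inverse u) (inverse p) n * qpoch (inverse v) (inverse p) n
           * qpoch (inverse w) (inverse p) n / qpoch (inverse s) (inverse p) n
       = (s / (u * v * w)) ^ n * inverse p ^ (2 * (n choose 2))
         * (qpoch u p n * qpoch v p n * qpoch w p n / qpoch s p n)"
proof -
  have signs: "(- inverse a) ^ n * (- inverse b) ^ n * (- inverse c) ^ n / (- inverse d) ^ n
      = (d / (a * b * c)) ^ n" if "d \<noteq> 0" for a b c d :: complex
  proof -
    have "(- inverse a) * (- inverse b) * (- inverse c) / (- inverse d) = d / (a * b * c)"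
      using that by (simp add: field_simps)
    then show ?thesis by (simp flip: power_mult_distrib power_divide)
  qed
  have W: "inverse p ^ (n choose 2) \<noteq> 0" using assms(5) by simp
  have regroup: "a1 * W * Q1 * (a2 * W * Q2) * (a3 * W * Q3) / (b * W * R)
      = (a1 * a2 * a3) / b * W ^ 2 * (Q1 * Q2 * Q3 / R)"
    if "W \<noteq> 0" for W a1 a2 a3 b Q1 Q2 Q3 R :: complex
    using that by (simp add: power2_eq_square field_simps)
  show ?thesis
    unfolding assms(1-4)[THEN qpoch_inverse[OF _ assms(5)]] regroup[OF W] signs[OF \<open>s \<noteq> 0\<close>]
    by (simp add: power_mult mult.commute[of 2])
qed

text \<open>phi43 n s t1 t2 u v w p is the terminating series 4phi3(p^-n, s, t1, t2; u, v, w; p, p);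
  it is balanced when u v w = p^(1-n) s t1 t2.\<close>
definition phi43 :: "nat \<Rightarrow> complex \<Rightarrow> complex \<Rightarrow> complex \<Rightarrow> complex \<Rightarrow> complex \<Rightarrow> complex \<Rightarrow> complex \<Rightarrow> complex" where
  "phi43 n s t1 t2 u v w p =
     (\<Sum>j\<le>n. qpoch (inverse p ^ n) p j * qpoch s p j * qpoch t1 p j * qpoch t2 p j
               / (qpoch u p j * qpoch v p j * qpoch w p j * qpoch p p j) * p ^ j)"

lemma phi43_commute: "phi43 n s t1 t2 u v w p = phi43 n s t2 t1 u v w p"
  unfolding phi43_def by (simp add: mult_ac)

lemma phi43_inverse:
  assumes "s \<noteq> 0" "t1 \<noteq> 0" "t2 \<noteq> 0" "u \<noteq> 0" "v \<noteq> 0" "w \<noteq> 0" "p \<noteq> 0"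
    and balanced: "u * v * w * p ^ n = s * t1 * t2 * p"
  shows "phi43 n (inverse s) (inverse t1) (inverse t2) (inverse u) (inverse v) (inverse w) (inverse p)
       = phi43 n s t1 t2 u v w p"
  unfolding phi43_def
proof (rule sum.cong)
  fix j
  have inv: "inverse (inverse p) ^ n = inverse (inverse p ^ n)"
    by (simp add: power_inverse)
  have ratio: "qpoch (inverse (inverse p ^ n)) (inverse p) j * qpoch (inverse s) (inverse p) j
      * qpoch (inverse t1) (inverse p) j * qpoch (inverse t2) (inverse p) j
      / (qpoch (inverse u) (inverse p) j * qpoch (inverse v) (inverse p) j
         * qpoch (inverse w) (inverse p) j * qpoch (inverse p) (inverse p) j)
    = (u * v * w * p / (inverse p ^ n * s * t1 * t2)) ^ j
      * (qpoch (inverse p ^ n) p j * qpoch s p j * qpoch t1 p j * qpoch t2 p j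
         / (qpoch u p j * qpoch v p j * qpoch w p j * qpoch p p j))"
    by (rule qpoch_ratio_inverse) (use assms in simp_all)
  have p2: "u * v * w * p / (inverse p ^ n * s * t1 * t2) = p ^ 2"
    using assms by (simp add: field_simps power2_eq_square)
  have "(p ^ 2) ^ j * inverse p ^ j = p ^ j"
    using assms(7) by (simp add: power2_eq_square field_simps flip: power_mult_distrib)
  then show "qpoch (inverse (inverse p) ^ n) (inverse p) j * qpoch (inverse s) (inverse p) j
      * qpoch (inverse t1) (inverse p) j * qpoch (inverse t2) (inverse p) j
      / (qpoch (inverse u) (inverse p) j * qpoch (inverse v) (inverse p) j
         * qpoch (inverse w) (inverse p) j * qpoch (inverse p) (inverse p) j) * inverse p ^ j
    = qpoch (inverse p ^ n) p j * qpoch s p j * qpoch t1 p j * qpoch t2 p j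
      / (qpoch u p j * qpoch v p j * qpoch w p j * qpoch p p j) * p ^ j"
    unfolding inv ratio p2 by (simp add: mult_ac)
qed simp

lemma AWP_eq_phi43:
  "AWP i y \<alpha> \<beta> \<gamma> \<delta> p =
     qpoch (\<alpha>*\<beta>) p i * qpoch (\<alpha>*\<gamma>) p i * qpoch (\<alpha>*\<delta>) p i / (\<alpha> ^ i * qpoch (\<alpha>*\<beta>*\<gamma>*\<delta> * p ^ (i - 1)) p i)
     * phi43 i (\<alpha>*\<beta>*\<gamma>*\<delta> * p ^ (i - 1)) (\<alpha> * y) (\<alpha> * inverse y) (\<alpha>*\<beta>) (\<alpha>*\<gamma>) (\<alpha>*\<delta>) p"
  unfolding AWP_def phi43_def ..

lemma AWP_prefactor_inverse:
  fixes \<alpha> \<beta> \<gamma> \<delta> p :: complex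
  assumes nonzero: "\<alpha> \<noteq> 0" "\<beta> \<noteq> 0" "\<gamma> \<noteq> 0" "\<delta> \<noteq> 0" "p \<noteq> 0"
  shows "qpoch (inverse (\<alpha> * \<beta>)) (inverse p) i * qpoch (inverse (\<alpha> * \<gamma>)) (inverse p) i
           * qpoch (inverse (\<alpha> * \<delta>)) (inverse p) i
         / (inverse \<alpha> ^ i * qpoch (inverse (\<alpha> * \<beta> * \<gamma> * \<delta> * p ^ (i - 1))) (inverse p) i)
       = qpoch (\<alpha> * \<beta>) p i * qpoch (\<alpha> * \<gamma>) p i * qpoch (\<alpha> * \<delta>) p i
         / (\<alpha> ^ i * qpoch (\<alpha> * \<beta> * \<gamma> * \<delta> * p ^ (i - 1)) p i)"
proof -
  define s where "s = \<alpha> * \<beta> * \<gamma> * \<delta> * p ^ (i - 1)"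
  define X where "X = s / (\<alpha> * \<beta> * (\<alpha> * \<gamma>) * (\<alpha> * \<delta>))"
  define W where "W = inverse p ^ (2 * (i choose 2))"
  have "\<alpha> ^ 2 * X = p ^ (i - 1)"
    using nonzero unfolding X_def s_def by (simp add: field_simps power2_eq_square)
  then have "(\<alpha> ^ 2 * X) ^ i * W = 1"
    using nonzero unfolding W_def
    by (simp add: two_times_choose_two power_inverse mult.commute[of i] flip: power_mult)
  then have "\<alpha> ^ i * (\<alpha> ^ i * (X ^ i * W)) = 1"
    by (simp add: power_mult_distrib power2_eq_square mult_ac)
  then have scale: "\<alpha> ^ i * (X ^ i * W) = inverse \<alpha> ^ i"
    by (simp add: inverse_unique power_inverse)
  have "s \<noteq> 0" using nonzero by (simp add: s_def)
  then have ratio: "qpoch (inverse (\<alpha> * \<beta>)) (inverse p) i * qpoch (inverse (\<alpha> * \<gamma>)) (inverse p) i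
        * qpoch (inverse (\<alpha> * \<delta>)) (inverse p) i / qpoch (inverse s) (inverse p) i
      = X ^ i * W * (qpoch (\<alpha> * \<beta>) p i * qpoch (\<alpha> * \<gamma>) p i * qpoch (\<alpha> * \<delta>) p i / qpoch s p i)"
    unfolding X_def W_def using nonzero by (intro qpoch_prefactor_inverse) simp_all
  have "A / (inverse a * B) = C / (a * D)" if "A / B = K * (C / D)" "a * K = inverse a"
    for A B C D K a :: complex
  proof -
    have "A / (inverse a * B) = a * (A / B)"
      by (simp add: divide_inverse inverse_mult_distrib mult_ac)
    also have "\<dots> = (a * K) * (C / D)"
      using that(1) by simp
    also have "\<dots> = C / (a * D)"
      using that(2) by (simp add: divide_inverse inverse_mult_distrib mult_ac)
    finally show ?thesis .
  qed
  from this[OF ratio] scale show ?thesis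
    unfolding s_def by (simp add: power_inverse)
qed

lemma AWP_inverse:
  fixes \<alpha> \<beta> \<gamma> \<delta> p y :: complex
  assumes nonzero: "\<alpha> \<noteq> 0" "\<beta> \<noteq> 0" "\<gamma> \<noteq> 0" "\<delta> \<noteq> 0" "p \<noteq> 0" "y \<noteq> 0"
  shows "AWP i y (inverse \<alpha>) (inverse \<beta>) (inverse \<gamma>) (inverse \<delta>) (inverse p) = AWP i y \<alpha> \<beta> \<gamma> \<delta> p"
proof (cases "i = 0")
  case True
  then show ?thesis by (simp add: AWP_def qpoch_def)
next
  case False
  define s where "s = \<alpha> * \<beta> * \<gamma> * \<delta> * p ^ (i - 1)"
  have args: "inverse \<alpha> * inverse \<beta> = inverse (\<alpha> * \<beta>)"
    "inverse \<alpha> * inverse \<gamma> = inverse (\<alpha> * \<gamma>)"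
    "inverse \<alpha> * inverse \<delta> = inverse (\<alpha> * \<delta>)"
    "inverse (\<alpha> * \<beta>) * inverse \<gamma> * inverse \<delta> * inverse p ^ (i - 1) = inverse s"
    "inverse \<alpha> * y = inverse (\<alpha> * inverse y)"
    "inverse \<alpha> * inverse y = inverse (\<alpha> * y)"
    by (simp_all add: s_def inverse_mult_distrib power_inverse)
  have "p ^ i = p ^ (i - 1) * p"
    using False by (simp flip: power_Suc2)
  then have balanced: "\<alpha> * \<beta> * (\<alpha> * \<gamma>) * (\<alpha> * \<delta>) * p ^ i = s * (\<alpha> * inverse y) * (\<alpha> * y) * p"
    using nonzero unfolding s_def by (simp add: field_simps)
  have "AWP i y (inverse \<alpha>) (inverse \<beta>) (inverse \<gamma>) (inverse \<delta>) (inverse p)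
      = qpoch (\<alpha> * \<beta>) p i * qpoch (\<alpha> * \<gamma>) p i * qpoch (\<alpha> * \<delta>) p i / (\<alpha> ^ i * qpoch s p i)
        * phi43 i s (\<alpha> * inverse y) (\<alpha> * y) (\<alpha> * \<beta>) (\<alpha> * \<gamma>) (\<alpha> * \<delta>) p"
    unfolding AWP_eq_phi43 args AWP_prefactor_inverse[OF nonzero(1-5), of i, folded s_def]
    by (subst phi43_inverse) (use nonzero balanced s_def in simp_all)
  then show ?thesis
    unfolding AWP_eq_phi43[of i y \<alpha>] s_def[symmetric] by (simp only: phi43_commute)
qed

lemma AWP_shifted_inverse:
  fixes a b c d q y :: complex
  assumes "a \<noteq> 0" "b \<noteq> 0" "c \<noteq> 0" "d \<noteq> 0" "q \<noteq> 0" "y \<noteq> 0"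
  shows "AWP n y (inverse a * inverse q) (inverse b * inverse q) (inverse c) (inverse d) (inverse q)
       = AWP n y (a * q) (b * q) c d q"
  using AWP_inverse[of "a * q" "b * q" c d q y n] assms by (simp add: inverse_mult_distrib)

lemma shift_factor_inverse:
  fixes a b y :: complex
  assumes "a \<noteq> 0" "b \<noteq> 0"
  shows "y * (1 - inverse a * inverse y) * (1 - inverse b * inverse y)
       = inverse a * inverse b * inverse y * (1 - a * y) * (1 - b * y)"
  using assms by (cases "y = 0") (simp_all add: field_simps)

lemma power_double_pred:
  assumes "1 \<le> i"
  shows "(q :: 'a :: monoid_mult) ^ (2 * i - 1) = q ^ i * q ^ (i - 1)"
proof -
  have "2 * i - 1 = i + (i - 1)" using assms by simp
  then show ?thesis by (simp add: power_add)
qed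

lemma one_minus_inverse: "(x :: 'a :: field) \<noteq> 0 \<Longrightarrow> 1 - inverse x = - ((1 - x) / x)"
  by (simp add: field_simps)

lemma divide_rescale:
  fixes \<sigma> \<tau> \<iota> b W M N :: "'a::field"
  assumes "\<sigma> * b = \<iota> * \<tau>" "\<iota> \<noteq> 0" "\<tau> \<noteq> 0" "W \<noteq> 0"
  shows "\<sigma> * W * M / (\<iota> * (\<tau> * W * N)) = M / (b * N)"
proof -
  have "b \<noteq> 0" using assms(1-3) by auto
  then have "\<sigma> / (\<iota> * \<tau>) = 1 / b"
    using assms(1-3) by (simp add: field_simps)
  moreover have "\<sigma> * W * M / (\<iota> * (\<tau> * W * N)) = \<sigma> / (\<iota> * \<tau>) * (M / N)"
    using assms(4) by (simp add: mult_ac)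
  ultimately show ?thesis by simp
qed

lemma prefactor_rescale:
  fixes K K' N Den Z M E B B' :: "'a :: field"
  assumes "N / Den = Z * (M / E)" "K' * Z = K" "B' = B"
  shows "K' * N / Den * B' = K * M / E * B"
proof -
  have "K' * N / Den = K' * Z * (M / E)"
    using assms(1) by (simp add: mult.assoc flip: times_divide_eq_right)
  then show ?thesis
    using assms(2,3) by simp
qed

lemma normaliser_inverse:
  fixes a b c d q :: complex
  assumes nonzero: "a \<noteq> 0" "b \<noteq> 0" "c \<noteq> 0" "d \<noteq> 0" "q \<noteq> 0" and "1 \<le> i"
  shows "qpoch (inverse a * inverse b * inverse c * inverse d) (inverse q) (2 * i)
         / (inverse a ^ i * (qpoch (inverse q) (inverse q) i * qpoch (inverse b * inverse c) (inverse q) i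
              * qpoch (inverse b * inverse d) (inverse q) i * qpoch (inverse c * inverse d) (inverse q) i))
       = (1 - a * b * c * d * q ^ (2 * i - 1))
         * (qpoch (a * b * c * d) q (2 * i - 1)
            / (a ^ i * (qpoch q q i * qpoch (b * c) q i * qpoch (b * d) q i * qpoch (c * d) q i)))"
proof -
  define W where "W = inverse q ^ (4 * (i choose 2))"
  define \<sigma> where "\<sigma> = (- inverse (a * b * c * d)) ^ (2 * i) * inverse q ^ i"
  define \<tau> where "\<tau> = inverse (q * (b * c) * (b * d) * (c * d)) ^ i"
  have split: "qpoch (a * b * c * d) q (2 * i)
      = qpoch (a * b * c * d) q (2 * i - 1) * (1 - a * b * c * d * q ^ (2 * i - 1))"
    using \<open>1 \<le> i\<close> qpoch_Suc[of "a * b * c * d" q "2 * i - 1"] by simp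
  have inv: "inverse a * inverse b * inverse c * inverse d = inverse (a * b * c * d)"
    by (simp add: inverse_mult_distrib)
  have pow: "inverse q ^ (2 * i choose 2) = inverse q ^ i * W"
    by (simp add: W_def double_choose_two power_add)
  have abcd: "a * b * c * d \<noteq> 0" using nonzero by simp
  have num: "qpoch (inverse a * inverse b * inverse c * inverse d) (inverse q) (2 * i)
      = \<sigma> * W * ((1 - a * b * c * d * q ^ (2 * i - 1)) * qpoch (a * b * c * d) q (2 * i - 1))"
    by (simp only: inv qpoch_inverse[OF abcd nonzero(5)] split pow) (simp add: \<sigma>_def mult_ac)
  have den: "qpoch (inverse q) (inverse q) i * qpoch (inverse b * inverse c) (inverse q) i
        * qpoch (inverse b * inverse d) (inverse q) i * qpoch (inverse c * inverse d) (inverse q) i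
      = \<tau> * W * (qpoch q q i * qpoch (b * c) q i * qpoch (b * d) q i * qpoch (c * d) q i)"
    using qpoch_prod4_inverse[of q "b * c" "b * d" "c * d" q i] nonzero
    by (simp add: \<tau>_def W_def inverse_mult_distrib)
  have "(- inverse (a * b * c * d)) ^ 2 * inverse q * a = inverse a * inverse (q * (b * c) * (b * d) * (c * d))"
    using nonzero by (simp add: field_simps power2_eq_square)
  then have scalar: "\<sigma> * a ^ i = inverse a ^ i * \<tau>"
    unfolding \<sigma>_def \<tau>_def by (simp only: power_mult flip: power_mult_distrib)
  show ?thesis
    unfolding num den
    by (subst divide_rescale[OF scalar]) (use nonzero in \<open>simp_all add: \<tau>_def W_def\<close>)
qed

lemma normaliser_last_inverse:
  fixes a b c d q :: complex
  assumes nonzero: "a \<noteq> 0" "b \<noteq> 0" "c \<noteq> 0" "d \<noteq> 0" "q \<noteq> 0"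
    and "1 \<le> D" and abq: "a * b * q ^ D = 1"
  shows "qpoch (inverse a * inverse b * inverse c * inverse d) (inverse q) (2 * D - 1)
         / (inverse a ^ D * (qpoch (inverse q) (inverse q) D * qpoch (inverse b * inverse c) (inverse q) D
              * qpoch (inverse b * inverse d) (inverse q) D * qpoch (inverse c * inverse d) (inverse q) (D - 1)))
       = qpoch (a * b * c * d) q (2 * D - 1)
         / (a ^ D * (qpoch q q D * qpoch (b * c) q D * qpoch (b * d) q D * qpoch (c * d) q (D - 1)))"
proof -
  obtain m where D: "D = Suc m" using \<open>1 \<le> D\<close> by (cases D) auto
  define x where "x = inverse (a * b * c * d)"
  define y where "y = inverse q * inverse (b * c) * inverse (b * d) * inverse (c * d)"
  define W where "W = inverse q ^ (Suc (2 * m) choose 2)"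
  define \<sigma> where "\<sigma> = (- x) ^ Suc (2 * m)"
  define \<tau> where "\<tau> = (- inverse q) ^ D * (- inverse (b * c)) ^ D * (- inverse (b * d)) ^ D
                      * (- inverse (c * d)) ^ m"
  have odd: "2 * D - 1 = Suc (2 * m)" using D by simp
  have inv: "inverse a * inverse b * inverse c * inverse d = x"
    "inverse b * inverse c = inverse (b * c)" "inverse b * inverse d = inverse (b * d)"
    "inverse c * inverse d = inverse (c * d)"
    by (simp_all add: x_def inverse_mult_distrib)
  have "a * b * c * d \<noteq> 0" using nonzero by simp
  then have num: "qpoch (inverse a * inverse b * inverse c * inverse d) (inverse q) (2 * D - 1)
      = \<sigma> * W * qpoch (a * b * c * d) q (2 * D - 1)"
    unfolding inv(1) odd x_def \<sigma>_def W_def by (rule qpoch_inverse[OF _ nonzero(5)])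
  have W: "W = (inverse q ^ (D choose 2)) ^ 3 * inverse q ^ (m choose 2)"
    unfolding W_def Suc_double_choose_two D by (metis power_add power_mult mult.commute)
  have "b * c \<noteq> 0" "b * d \<noteq> 0" "c * d \<noteq> 0" using nonzero by simp_all
  note inverted = qpoch_inverse[OF nonzero(5) nonzero(5)] this[THEN qpoch_inverse[OF _ nonzero(5)]]
  have den: "qpoch (inverse q) (inverse q) D * qpoch (inverse b * inverse c) (inverse q) D
        * qpoch (inverse b * inverse d) (inverse q) D * qpoch (inverse c * inverse d) (inverse q) (D - 1)
      = \<tau> * W * (qpoch q q D * qpoch (b * c) q D * qpoch (b * d) q D * qpoch (c * d) q (D - 1))"
    unfolding inv(2-4) inverted W \<tau>_def \<open>D = Suc m\<close> diff_Suc_1 by (simp only: power3_eq_cube mult_ac)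
  have x2: "x ^ 2 * a = q * (inverse a * y)"
    using nonzero unfolding x_def y_def by (simp add: field_simps power2_eq_square)
  have lead: "- x * a * q ^ m = inverse a * ((- inverse q) * (- inverse (b * c)) * (- inverse (b * d)))"
    using nonzero abq unfolding x_def D by (simp add: field_simps)
  have y: "(- inverse q) * (- inverse (b * c)) * (- inverse (b * d)) * (- inverse (c * d)) = y"
    unfolding y_def by simp
  have "\<sigma> = - x * (x ^ 2) ^ m"
    unfolding \<sigma>_def power_Suc power_mult by simp
  then have "\<sigma> * a ^ D = (- x * a) * (x ^ 2 * a) ^ m"
    unfolding D by (simp add: power_mult_distrib mult_ac)
  also have "\<dots> = (- x * a * q ^ m) * (inverse a * y) ^ m"
    unfolding x2 by (simp add: power_mult_distrib mult_ac)
  also have "\<dots> = inverse a ^ D * \<tau>"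
    unfolding lead \<tau>_def D y[symmetric] by (simp only: power_mult_distrib power_Suc mult_ac)
  finally have scalar: "\<sigma> * a ^ D = inverse a ^ D * \<tau>" .
  show ?thesis
    unfolding num den
    by (subst divide_rescale[OF scalar]) (use nonzero in \<open>simp_all add: \<tau>_def W_def\<close>)
qed

lemma eplus_coefficient_inverse:
  fixes a b c d q :: complex
  assumes nonzero: "a \<noteq> 0" "b \<noteq> 0" "c \<noteq> 0" "d \<noteq> 0" "q \<noteq> 0"
    and "1 \<le> i" and nondeg: "a * b * c * d * q ^ (2 * i - 1) \<noteq> 1"
  shows "inverse a * inverse b * (1 - inverse q ^ i) * (1 - inverse c * inverse d * inverse q ^ (i - 1))
           / ((inverse a * inverse b - 1) * (1 - inverse a * inverse b * inverse c * inverse d * inverse q ^ (2 * i - 1)))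
         * (1 - a * b * c * d * q ^ (2 * i - 1))
       = a * b * (1 - q ^ i) * (1 - c * d * q ^ (i - 1)) / (a * b - 1)"
proof -
  have f: "1 - inverse q ^ i = - ((1 - q ^ i) / q ^ i)"
    "1 - inverse c * inverse d * inverse q ^ (i - 1) = - ((1 - c * d * q ^ (i - 1)) / (c * d * q ^ (i - 1)))"
    "inverse a * inverse b - 1 = - ((a * b - 1) / (a * b))"
    "1 - inverse a * inverse b * inverse c * inverse d * inverse q ^ (2 * i - 1)
       = - ((1 - a * b * c * d * q ^ (2 * i - 1)) / (a * b * c * d * q ^ (2 * i - 1)))"
    using nonzero
    by (simp_all add: one_minus_inverse inverse_mult_distrib power_inverse flip: inverse_mult_distrib)
      (simp add: field_simps)
  \<comment> \<open>No hypothesis a b \<noteq> 1 is needed: for N = 0 both sides are divisions by zero.\<close>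
  have key: "inverse a * inverse b * - (A / u) * - (B / (c * d * v))
        / (- (N / (a * b)) * - (Z / (a * b * c * d * (u * v)))) * Z
      = a * b * A * B / N" if "u \<noteq> 0" "v \<noteq> 0" "Z \<noteq> 0" for A B N Z u v :: complex
    using that nonzero by (cases "N = 0") (auto simp: field_simps)
  show ?thesis
    unfolding f unfolding power_double_pred[OF \<open>1 \<le> i\<close>]
    by (rule key) (use nonzero nondeg[unfolded power_double_pred[OF \<open>1 \<le> i\<close>]] in simp_all)
qed

lemma eminus_coefficient_inverse:
  fixes a b c d q :: complex
  assumes nonzero: "a \<noteq> 0" "b \<noteq> 0" "c \<noteq> 0" "d \<noteq> 0" "q \<noteq> 0"
    and "1 \<le> i" and nondeg: "a * b * c * d * q ^ (2 * i - 1) \<noteq> 1"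
  shows "(1 - inverse a * inverse b * inverse q ^ i) * (1 - inverse a * inverse b * inverse c * inverse d * inverse q ^ (i - 1))
           / ((1 - inverse a * inverse b) * (1 - inverse a * inverse b * inverse c * inverse d * inverse q ^ (2 * i - 1)))
         * (1 - a * b * c * d * q ^ (2 * i - 1))
       = (1 - a * b * q ^ i) * (1 - a * b * c * d * q ^ (i - 1)) / (1 - a * b)"
proof -
  have f: "1 - inverse a * inverse b * inverse q ^ i = - ((1 - a * b * q ^ i) / (a * b * q ^ i))"
    "1 - inverse a * inverse b * inverse c * inverse d * inverse q ^ (i - 1)
       = - ((1 - a * b * c * d * q ^ (i - 1)) / (a * b * c * d * q ^ (i - 1)))"
    "1 - inverse a * inverse b = - ((1 - a * b) / (a * b))"
    "1 - inverse a * inverse b * inverse c * inverse d * inverse q ^ (2 * i - 1)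
       = - ((1 - a * b * c * d * q ^ (2 * i - 1)) / (a * b * c * d * q ^ (2 * i - 1)))"
    using nonzero
    by (simp_all add: one_minus_inverse inverse_mult_distrib power_inverse flip: inverse_mult_distrib)
  have key: "- (X / (a * b * u)) * - (Y / (a * b * c * d * v))
        / (- (P / (a * b)) * - (Z / (a * b * c * d * (u * v)))) * Z
      = X * Y / P" if "u \<noteq> 0" "v \<noteq> 0" "Z \<noteq> 0" for X Y P Z u v :: complex
    using that nonzero by (cases "P = 0") (auto simp: field_simps)
  show ?thesis
    unfolding f unfolding power_double_pred[OF \<open>1 \<le> i\<close>]
    by (rule key) (use nonzero nondeg[unfolded power_double_pred[OF \<open>1 \<le> i\<close>]] in simp_all)
qed

lemma eminus_inner_coefficient_inverse:
  fixes a b c d q :: complex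
  assumes nonzero: "a \<noteq> 0" "b \<noteq> 0" "c \<noteq> 0" "d \<noteq> 0" "q \<noteq> 0"
  shows "inverse a * inverse b * (1 - inverse q ^ i) * (1 - inverse c * inverse d * inverse q ^ (i - 1))
           / ((1 - inverse a * inverse b * inverse q ^ i) * (1 - inverse a * inverse b * inverse c * inverse d * inverse q ^ (i - 1)))
       = a * b * (1 - q ^ i) * (1 - c * d * q ^ (i - 1)) / ((1 - a * b * q ^ i) * (1 - a * b * c * d * q ^ (i - 1)))"
proof -
  have f: "1 - inverse q ^ i = - ((1 - q ^ i) / q ^ i)"
    "1 - inverse c * inverse d * inverse q ^ (i - 1) = - ((1 - c * d * q ^ (i - 1)) / (c * d * q ^ (i - 1)))"
    "1 - inverse a * inverse b * inverse q ^ i = - ((1 - a * b * q ^ i) / (a * b * q ^ i))"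
    "1 - inverse a * inverse b * inverse c * inverse d * inverse q ^ (i - 1)
       = - ((1 - a * b * c * d * q ^ (i - 1)) / (a * b * c * d * q ^ (i - 1)))"
    using nonzero by (simp_all add: one_minus_inverse inverse_mult_distrib power_inverse flip: inverse_mult_distrib)
  have key: "inverse a * inverse b * - (A / u) * - (B / (c * d * v)) / (- (X / (a * b * u)) * - (Y / (a * b * c * d * v)))
      = a * b * A * B / (X * Y)" if "u \<noteq> 0" "v \<noteq> 0" for A B X Y u v :: complex
    using that nonzero by (cases "X = 0 \<or> Y = 0") (auto simp: field_simps)
  show ?thesis
    unfolding f by (rule key) (use nonzero in simp_all)
qed

lemma eplus_gen_inverse:
  fixes a b c d q y :: complex
  assumes nonzero: "a \<noteq> 0" "b \<noteq> 0" "c \<noteq> 0" "d \<noteq> 0" "q \<noteq> 0" "y \<noteq> 0"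
    and i: "1 \<le> i" and nondeg: "a * b * c * d * q ^ (2 * i - 1) \<noteq> 1"
  shows "eplus_gen i y (inverse a) (inverse b) (inverse c) (inverse d) (inverse q)
       = a * b * (1 - q ^ i) * (1 - c * d * q ^ (i - 1)) / (a * b - 1)
         * qpoch (a * b * c * d) q (2 * i - 1)
           / (a ^ i * (qpoch q q i * qpoch (b * c) q i * qpoch (b * d) q i * qpoch (c * d) q i))
         * (AWP i y a b c d q
            - inverse a * inverse b * inverse y * (1 - a * y) * (1 - b * y) * AWP (i - 1) y (a * q) (b * q) c d q)"
  unfolding eplus_gen_def
  by (rule prefactor_rescale[OF normaliser_inverse[OF nonzero(1-5) i] eplus_coefficient_inverse[OF nonzero(1-5) i nondeg]])
    (simp add: AWP_inverse AWP_shifted_inverse shift_factor_inverse nonzero)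

lemma eminus_inverse:
  fixes a b c d q y :: complex
  assumes nonzero: "a \<noteq> 0" "b \<noteq> 0" "c \<noteq> 0" "d \<noteq> 0" "q \<noteq> 0" "y \<noteq> 0"
    and i: "1 \<le> i" and nondeg: "a * b * c * d * q ^ (2 * i - 1) \<noteq> 1"
  shows "eminus i y (inverse a) (inverse b) (inverse c) (inverse d) (inverse q)
       = (1 - a * b * q ^ i) * (1 - a * b * c * d * q ^ (i - 1)) / (1 - a * b)
         * qpoch (a * b * c * d) q (2 * i - 1)
           / (a ^ i * (qpoch q q i * qpoch (b * c) q i * qpoch (b * d) q i * qpoch (c * d) q i))
         * (AWP i y a b c d q
            - a * b * (1 - q ^ i) * (1 - c * d * q ^ (i - 1)) / ((1 - a * b * q ^ i) * (1 - a * b * c * d * q ^ (i - 1)))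
              * (inverse a * inverse b * inverse y * (1 - a * y) * (1 - b * y) * AWP (i - 1) y (a * q) (b * q) c d q))"
proof -
  have "i \<noteq> 0" using i by simp
  have regroup: "X * y * (1 - inverse a * inverse y) * (1 - inverse b * inverse y) * W
      = X * (y * (1 - inverse a * inverse y) * (1 - inverse b * inverse y) * W)" for X W :: complex
    by (simp only: mult.assoc)
  show ?thesis
    unfolding eminus_def if_not_P[OF \<open>i \<noteq> 0\<close>]
    by (rule prefactor_rescale[OF normaliser_inverse[OF nonzero(1-5) i] eminus_coefficient_inverse[OF nonzero(1-5) i nondeg]])
    (simp only: regroup eminus_inner_coefficient_inverse[OF nonzero(1-5)] shift_factor_inverse[OF nonzero(1,2)]
      AWP_inverse[OF nonzero] AWP_shifted_inverse[OF nonzero])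
qed

lemma eplus_last_inverse:
  fixes a b c d q y :: complex
  assumes nonzero: "a \<noteq> 0" "b \<noteq> 0" "c \<noteq> 0" "d \<noteq> 0" "q \<noteq> 0" "y \<noteq> 0"
    and "1 \<le> D" and abq: "a * b * q ^ D = 1"
  shows "eplus_last D y (inverse a) (inverse b) (inverse c) (inverse d) (inverse q)
       = qpoch (a * b * c * d) q (2 * D - 1)
           / (a ^ D * (qpoch q q D * qpoch (b * c) q D * qpoch (b * d) q D * qpoch (c * d) q (D - 1)))
         * AWP D y a b c d q"
  unfolding eplus_last_def normaliser_last_inverse[OF nonzero(1-5) \<open>1 \<le> D\<close> abq] AWP_inverse[OF nonzero] ..

lemma parameter_products:
  fixes qh ssh r1h r2h a b c d :: complex
  assumes "qh \<noteq> 0" "ssh \<noteq> 0" "r1h \<noteq> 0" "r2h \<noteq> 0"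
    and "a = r1h * r2h / (ssh * qh ^ D)" "b = ssh / (r1h * r2h * qh ^ D)"
    and "c = r2h * ssh * qh ^ (D + 2) / r1h" "d = r1h * ssh * qh ^ (D + 2) / r2h"
  shows "a * b * (qh ^ 2) ^ D = 1" "a * b * c * d = ssh ^ 2 * (qh ^ 2) ^ 2"
proof -
  have "(qh ^ 2) ^ D = qh ^ D * qh ^ D" "qh ^ (D + 2) = qh ^ D * qh ^ 2"
    by (simp_all add: power2_eq_square power_mult_distrib power_add)
  then show "a * b * (qh ^ 2) ^ D = 1" "a * b * c * d = ssh ^ 2 * (qh ^ 2) ^ 2"
    unfolding assms(5-8) using assms(1-4) by (simp_all add: field_simps power2_eq_square)
qed

theorem proposition10p7:
  fixes D :: nat and qh sh ssh r1h r2h a b c d :: complex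
  assumes D3: "D \<ge> 3"
    and nonzero: "qh \<noteq> 0" "sh \<noteq> 0" "ssh \<noteq> 0" "r1h \<noteq> 0" "r2h \<noteq> 0"
    and q_not_root: "\<forall>n::nat. n > 0 \<longrightarrow> (qh^2) ^ n \<noteq> 1"
    and sqrt_rel: "r1h * r2h = sh * ssh * qh ^ (D + 1)"
    and nondeg1: "\<forall>i. 1 \<le> i \<and> i \<le> D \<longrightarrow>
        (qh^2) ^ i \<noteq> 1 \<and> r1h^2 * (qh^2) ^ i \<noteq> 1 \<and> r2h^2 * (qh^2) ^ i \<noteq> 1 \<and>
        ssh^2 * (qh^2) ^ i / r1h^2 \<noteq> 1 \<and> ssh^2 * (qh^2) ^ i / r2h^2 \<noteq> 1"
    and nondeg2: "\<forall>i. 2 \<le> i \<and> i \<le> 2*D \<longrightarrow>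
        sh^2 * (qh^2) ^ i \<noteq> 1 \<and> ssh^2 * (qh^2) ^ i \<noteq> 1"
    and a_def: "a = r1h * r2h / (ssh * qh ^ D)"
    and b_def: "b = ssh / (r1h * r2h * qh ^ D)"
    and c_def: "c = r2h * ssh * qh ^ (D + 2) / r1h"
    and d_def: "d = r1h * ssh * qh ^ (D + 2) / r2h"
  shows
    "(let q = qh^2;
          P = (\<lambda>i y. AWP i y a b c d q);
          Q = (\<lambda>i y. inverse a * inverse b * inverse y * (1 - a*y) * (1 - b*y)
                        * AWP (i - 1) y (a*q) (b*q) c d q)
      in
      (\<forall>i y. 1 \<le> i \<and> i \<le> D - 1 \<and> y \<noteq> 0 \<longrightarrow>
         eplus D (i - 1) y (inverse a) (inverse b) (inverse c) (inverse d) (inverse q)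
         = (a*b * (1 - q^i) * (1 - c*d * q^(i - 1))) / (a*b - 1)
           * qpoch (a*b*c*d) q (2*i - 1)
             / (a^i * (qpoch q q i * qpoch (b*c) q i * qpoch (b*d) q i * qpoch (c*d) q i))
           * (P i y - Q i y))
    \<and> (\<forall>i y. 1 \<le> i \<and> i \<le> D - 1 \<and> y \<noteq> 0 \<longrightarrow>
         eminus i y (inverse a) (inverse b) (inverse c) (inverse d) (inverse q)
         = ((1 - a*b * q^i) * (1 - a*b*c*d * q^(i - 1))) / (1 - a*b)
           * qpoch (a*b*c*d) q (2*i - 1)
             / (a^i * (qpoch q q i * qpoch (b*c) q i * qpoch (b*d) q i * qpoch (c*d) q i))
           * (P i y - (a*b * (1 - q^i) * (1 - c*d * q^(i - 1)))
                        / ((1 - a*b * q^i) * (1 - a*b*c*d * q^(i - 1))) * Q i y))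
    \<and> (\<forall>y. y \<noteq> 0 \<longrightarrow>
         eminus 0 y (inverse a) (inverse b) (inverse c) (inverse d) (inverse q) = 1)
    \<and> (\<forall>y. y \<noteq> 0 \<longrightarrow>
         eplus D (D - 1) y (inverse a) (inverse b) (inverse c) (inverse d) (inverse q)
         = qpoch (a*b*c*d) q (2*D - 1)
             / (a^D * (qpoch q q D * qpoch (b*c) q D * qpoch (b*d) q D * qpoch (c*d) q (D - 1)))
           * P D y))"
proof -
  define q where "q = qh ^ 2"
  have abcdq: "a \<noteq> 0" "b \<noteq> 0" "c \<noteq> 0" "d \<noteq> 0" "q \<noteq> 0"
    using nonzero unfolding a_def b_def c_def d_def q_def by simp_all
  note products = parameter_products[OF nonzero(1,3-5) a_def b_def c_def d_def, folded q_def]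
  \<comment> \<open>Besides nonvanishing, only the ssh-part of nondeg2 is needed.\<close>
  have nondeg: "a * b * c * d * q ^ (2 * i - 1) \<noteq> 1" if "1 \<le> i" "i \<le> D - 1" for i
  proof -
    have "2 + (2 * i - 1) = 2 * i + 1" using that by simp
    then have "a * b * c * d * q ^ (2 * i - 1) = ssh ^ 2 * q ^ (2 * i + 1)"
      unfolding products(2) by (metis mult.assoc power_add)
    moreover have "2 \<le> 2 * i + 1 \<and> 2 * i + 1 \<le> 2 * D" using that by simp
    ultimately show ?thesis
      using nondeg2 unfolding q_def by metis
  qed
  have eplus_interior: "eplus D (i - 1) y \<alpha> \<beta> \<gamma> \<delta> p = eplus_gen i y \<alpha> \<beta> \<gamma> \<delta> p"
    if "1 \<le> i" "i \<le> D - 1" for i y \<alpha> \<beta> \<gamma> \<delta> p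
    using that D3 unfolding eplus_def by auto
  have eplus_final: "eplus D (D - 1) y \<alpha> \<beta> \<gamma> \<delta> p = eplus_last D y \<alpha> \<beta> \<gamma> \<delta> p" for y \<alpha> \<beta> \<gamma> \<delta> p
    using D3 by (simp add: eplus_def)
  have "1 \<le> D" using D3 by simp
  show ?thesis
    unfolding Let_def q_def[symmetric]
    apply (intro conjI allI impI)
    subgoal for i y
      using eplus_interior[of i y] eplus_gen_inverse[of a b c d q y i] abcdq nondeg[of i] by simp
    subgoal for i y
      using eminus_inverse[of a b c d q y i] abcdq nondeg[of i] by simp
    subgoal by (simp add: eminus_def)
    subgoal for y
      using eplus_final[of y] eplus_last_inverse[of a b c d q y D] abcdq products(1) \<open>1 \<le> D\<close> by simp
    done
qed

end
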